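(* Let $k\subset K$ be $\Delta$-fields, let $\Lambda\subset\Delta$ and $\Pi=\Delta\setminus\Lambda$. Assume that $C_k^\Lambda$ is a $\Pi$-differentially closed $\Pi$-field. If $K$ is a $\Delta$-constrained extension of $k$, then $C_K^\Lambda=C_k^\Lambda$.
   Context: All fields have characteristic zero; a $\Delta$-field is a field with a finite set $\Delta$ of commuting derivations. $C_k^\Lambda=\{c\in k:\partial c=0\ \forall\partial\in\Lambda\}$, which is a $\Pi$-field. A $\Pi$-field is $\Pi$-differentially closed if every finite system $P_1=\cdots=P_r=0,\ Q\ne0$ of $\Pi$-differential polynomials over it having a solution in some $\Pi$-extension field has a solution in it (if $\Pi=\emptyset$ this means algebraically closed). For $\eta=(\eta_1,\ldots,\eta_r)\in K^r$, $k\{\eta\}_\Delta$ is the ring generated over $k$ by the $\eta_i$ and all their derivatives. $\eta$ is constrained over $k$ if there exist $P_1,\ldots,P_s,Q\in k\{y_1,\ldots,y_r\}_\Delta$ with $P_j(\eta)=0$, $Q(\eta)\ne0$, such that for every $\Delta$-field $E\supset k$ and every $\zeta\in E^r$ with $P_j(\zeta)=0$ for all $j$ and $Q(\zeta)\ne0$, the map $\eta_i\mapsto\zeta_i$ induces a $k$-isomorphism of $\Delta$-rings $k\{\eta\}_\Delta\to k\{\zeta\}_\Delta$. $K$ is a ($\Delta$-)constrained extension of $k$ if every finite family of elements of $K$ is constrained over $k$. *)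

theory Defs
  imports "HOL-Algebra.Algebra" "HOL-Library.Poly_Mapping"
begin

definition derivation :: "('a,'b) ring_scheme \<Rightarrow> ('a \<Rightarrow> 'a) \<Rightarrow> bool" where
  "derivation R \<delta> \<longleftrightarrow> \<delta> \<in> carrier R \<rightarrow> carrier R \<and>
     (\<forall>x\<in>carrier R. \<forall>y\<in>carrier R.
        \<delta> (x \<oplus>\<^bsub>R\<^esub> y) = \<delta> x \<oplus>\<^bsub>R\<^esub> \<delta> y \<and>
        \<delta> (x \<otimes>\<^bsub>R\<^esub> y) = (\<delta> x \<otimes>\<^bsub>R\<^esub> y) \<oplus>\<^bsub>R\<^esub> (x \<otimes>\<^bsub>R\<^esub> \<delta> y))"

definition char_zero :: "('a,'b) ring_scheme \<Rightarrow> bool" where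
  "char_zero R \<longleftrightarrow> (\<forall>n::nat. n \<noteq> 0 \<longrightarrow> [n] \<cdot>\<^bsub>R\<^esub> \<one>\<^bsub>R\<^esub> \<noteq> \<zero>\<^bsub>R\<^esub>)"

definition diff_field :: "('a,'b) ring_scheme \<Rightarrow> 'd set \<Rightarrow> ('d \<Rightarrow> 'a \<Rightarrow> 'a) \<Rightarrow> bool" where
  "diff_field R \<Delta> D \<longleftrightarrow> field R \<and> char_zero R \<and> finite \<Delta> \<and>
     (\<forall>d\<in>\<Delta>. derivation R (D d)) \<and>
     (\<forall>d\<in>\<Delta>. \<forall>e\<in>\<Delta>. \<forall>x\<in>carrier R. D d (D e x) = D e (D d x))"

definition diff_subfield :: "('a,'b) ring_scheme \<Rightarrow> 'd set \<Rightarrow> ('d \<Rightarrow> 'a \<Rightarrow> 'a) \<Rightarrow> 'a set \<Rightarrow> bool" where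
  "diff_subfield R \<Delta> D k \<longleftrightarrow> subfield k R \<and> (\<forall>d\<in>\<Delta>. D d ` k \<subseteq> k)"

definition diff_ext :: "('a,'b) ring_scheme \<Rightarrow> 'd set \<Rightarrow> ('d \<Rightarrow> 'a \<Rightarrow> 'a) \<Rightarrow> 'a set \<Rightarrow>
    ('e,'c) ring_scheme \<Rightarrow> ('d \<Rightarrow> 'e \<Rightarrow> 'e) \<Rightarrow> ('a \<Rightarrow> 'e) \<Rightarrow> bool" where
  "diff_ext R \<Delta> D k E DE \<phi> \<longleftrightarrow> diff_field E \<Delta> DE \<and>
     \<phi> \<in> ring_hom (R\<lparr>carrier := k\<rparr>) E \<and>
     (\<forall>d\<in>\<Delta>. \<forall>x\<in>k. \<phi> (D d x) = DE d (\<phi> x))"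

definition constants :: "('a,'b) ring_scheme \<Rightarrow> 'd set \<Rightarrow> ('d \<Rightarrow> 'a \<Rightarrow> 'a) \<Rightarrow> 'a set \<Rightarrow> 'a set" where
  "constants R \<Lambda> D k = {c\<in>k. \<forall>d\<in>\<Lambda>. D d c = \<zero>\<^bsub>R\<^esub>}"

text \<open>Differential polynomials in the differential indeterminates y_0,...,y_(r-1).
  A variable (i, ds) stands for the derivative theta y_i, where theta is the composite of the
  derivations listed in ds. A monomial is a finitely supported exponent map on variables;
  a differential polynomial is a finite set of monomials with coefficients.\<close>

type_synonym 'd dmono = "(nat \<times> 'd list) \<Rightarrow>\<^sub>0 nat"

definition dpolys :: "'c set \<Rightarrow> 'd set \<Rightarrow> nat \<Rightarrow> ('d dmono set \<times> ('d dmono \<Rightarrow> 'c)) set" where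
  "dpolys k \<Delta> r = {(M, c). finite M \<and>
      (\<forall>m\<in>M. \<forall>v\<in>Poly_Mapping.keys m. fst v < r \<and> set (snd v) \<subseteq> \<Delta>) \<and> (\<forall>m\<in>M. c m \<in> k)}"

definition dvar_val :: "('d \<Rightarrow> 'a \<Rightarrow> 'a) \<Rightarrow> (nat \<Rightarrow> 'a) \<Rightarrow> nat \<times> 'd list \<Rightarrow> 'a" where
  "dvar_val D \<eta> v = foldr D (snd v) (\<eta> (fst v))"

definition dmono_val :: "('a,'b) ring_scheme \<Rightarrow> ('d \<Rightarrow> 'a \<Rightarrow> 'a) \<Rightarrow> (nat \<Rightarrow> 'a) \<Rightarrow> 'd dmono \<Rightarrow> 'a" where
  "dmono_val R D \<eta> m = finprod R (\<lambda>v. dvar_val D \<eta> v [^]\<^bsub>R\<^esub> Poly_Mapping.lookup m v) (Poly_Mapping.keys m)"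

definition dpoly_eval :: "('a,'b) ring_scheme \<Rightarrow> ('d \<Rightarrow> 'a \<Rightarrow> 'a) \<Rightarrow> ('c \<Rightarrow> 'a) \<Rightarrow>
    ('d dmono set \<times> ('d dmono \<Rightarrow> 'c)) \<Rightarrow> (nat \<Rightarrow> 'a) \<Rightarrow> 'a" where
  "dpoly_eval R D \<phi> P \<eta> = finsum R (\<lambda>m. \<phi> (snd P m) \<otimes>\<^bsub>R\<^esub> dmono_val R D \<eta> m) (fst P)"

definition dring_gen :: "('a,'b) ring_scheme \<Rightarrow> 'd set \<Rightarrow> ('d \<Rightarrow> 'a \<Rightarrow> 'a) \<Rightarrow> 'a set \<Rightarrow> nat \<Rightarrow> (nat \<Rightarrow> 'a) \<Rightarrow> 'a set" where
  "dring_gen R \<Delta> D k r \<eta> =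
     generate_ring R (k \<union> {dvar_val D \<eta> (i, ds) | i ds. i < r \<and> set ds \<subseteq> \<Delta>})"

text \<open>eta (a tuple of length r in the Delta-field R) is constrained over the Delta-subfield k.
  Extension fields E are taken with carrier in the same type 'a as R.\<close>
definition constrained :: "('a,'b) ring_scheme \<Rightarrow> 'd set \<Rightarrow> ('d \<Rightarrow> 'a \<Rightarrow> 'a) \<Rightarrow> 'a set \<Rightarrow>
    nat \<Rightarrow> (nat \<Rightarrow> 'a) \<Rightarrow> bool" where
  "constrained R \<Delta> D k r \<eta> \<longleftrightarrow>
    (\<exists>Ps Q. finite Ps \<and> Ps \<subseteq> dpolys k \<Delta> r \<and> Q \<in> dpolys k \<Delta> r \<and>
      (\<forall>P\<in>Ps. dpoly_eval R D id P \<eta> = \<zero>\<^bsub>R\<^esub>) \<and> dpoly_eval R D id Q \<eta> \<noteq> \<zero>\<^bsub>R\<^esub> \<and>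
      (\<forall>(E::'a ring) DE \<phi> \<zeta>. diff_ext R \<Delta> D k E DE \<phi> \<longrightarrow> (\<forall>i<r. \<zeta> i \<in> carrier E) \<longrightarrow>
         (\<forall>P\<in>Ps. dpoly_eval E DE \<phi> P \<zeta> = \<zero>\<^bsub>E\<^esub>) \<longrightarrow> dpoly_eval E DE \<phi> Q \<zeta> \<noteq> \<zero>\<^bsub>E\<^esub> \<longrightarrow>
         (\<exists>\<psi>. \<psi> \<in> ring_iso (R\<lparr>carrier := dring_gen R \<Delta> D k r \<eta>\<rparr>)
                           (E\<lparr>carrier := dring_gen E \<Delta> DE (\<phi> ` k) r \<zeta>\<rparr>) \<and>
               (\<forall>x\<in>k. \<psi> x = \<phi> x) \<and> (\<forall>i<r. \<psi> (\<eta> i) = \<zeta> i) \<and>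
               (\<forall>d\<in>\<Delta>. \<forall>x\<in>dring_gen R \<Delta> D k r \<eta>. \<psi> (D d x) = DE d (\<psi> x)))))"

definition constrained_ext :: "('a,'b) ring_scheme \<Rightarrow> 'd set \<Rightarrow> ('d \<Rightarrow> 'a \<Rightarrow> 'a) \<Rightarrow> 'a set \<Rightarrow> bool" where
  "constrained_ext R \<Delta> D k \<longleftrightarrow>
     (\<forall>r \<eta>. (\<forall>i<r. \<eta> i \<in> carrier R) \<longrightarrow> constrained R \<Delta> D k r \<eta>)"

text \<open>The subset C of R, with the derivations indexed by Pi, is a Pi-differentially closed Pi-field.
  Extension fields are taken with carrier in the type 'a.\<close>
definition diff_closed :: "('a,'b) ring_scheme \<Rightarrow> 'd set \<Rightarrow> ('d \<Rightarrow> 'a \<Rightarrow> 'a) \<Rightarrow> 'a set \<Rightarrow> bool" where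
  "diff_closed R \<Theta> D C \<longleftrightarrow> diff_field (R\<lparr>carrier := C\<rparr>) \<Theta> D \<and>
    (\<forall>n Ps Q. finite Ps \<longrightarrow> Ps \<subseteq> dpolys C \<Theta> n \<longrightarrow> Q \<in> dpolys C \<Theta> n \<longrightarrow>
      (\<exists>(E::'a ring) DE \<phi> \<zeta>. diff_ext R \<Theta> D C E DE \<phi> \<and> (\<forall>i<n. \<zeta> i \<in> carrier E) \<and>
         (\<forall>P\<in>Ps. dpoly_eval E DE \<phi> P \<zeta> = \<zero>\<^bsub>E\<^esub>) \<and> dpoly_eval E DE \<phi> Q \<zeta> \<noteq> \<zero>\<^bsub>E\<^esub>) \<longrightarrow>
      (\<exists>\<eta>. (\<forall>i<n. \<eta> i \<in> C) \<and>
         (\<forall>P\<in>Ps. dpoly_eval R D id P \<eta> = \<zero>\<^bsub>R\<^esub>) \<and> dpoly_eval R D id Q \<eta> \<noteq> \<zero>\<^bsub>R\<^esub>))"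

end

theory Submission
  imports Defs
begin

text \<open>
  Let c be a \<Lambda>-constant of K. Being constrained over k, c satisfies a system Ps = 0, Q \<noteq> 0 over k
  such that every solution \<zeta> in an extension yields a k-isomorphism k{c} \<cong> k{\<zeta>} sending c to \<zeta>.
  Expand the coefficients of the system in a basis B of their span over the field C of \<Lambda>-constants
  of k. At a tuple of \<Lambda>-constants every monomial involving a derivation from \<Lambda> vanishes, so there
  each P equals the sum of the P_b \<cdot> b over b \<in> B, where the P_b are \<Pi>-polynomials over C
  (\<Pi> = \<Delta> - \<Lambda>). Constants linearly independent over C stay independent over k, so B is independent
  over all \<Lambda>-constants of K; hence c solves the \<Pi>-system P_b = 0, Q_b0 \<noteq> 0 over C, which therefore
  has a solution \<zeta> in the \<Pi>-differentially closed field C. Reassembling, \<zeta> solves Ps = 0, Q \<noteq> 0,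
  and the isomorphism k{c} \<cong> k{\<zeta>} fixes k, so it maps both c and \<zeta> \<in> k to \<zeta>: by injectivity
  c = \<zeta> \<in> k.
\<close>

text \<open>
  Extension fields in \<^const>\<open>constrained\<close> and \<^const>\<open>diff_closed\<close> are records of type
  \<^typ>\<open>'a ring\<close>; K itself enters as such an extension through \<^const>\<open>ring.truncate\<close>.
\<close>

lemma ring_truncate_simps [simp]:
  "carrier (ring.truncate K) = carrier K"
  "monoid.mult (ring.truncate K) = monoid.mult K"
  "monoid.one (ring.truncate K) = monoid.one K"
  "ring.zero (ring.truncate K) = ring.zero K"
  "ring.add (ring.truncate K) = ring.add K"
  by (simp_all add: ring.defs)

lemma finprod_ring_truncate [simp]: "finprod (ring.truncate K) = finprod K"
  by (auto simp: fun_eq_iff finprod_def)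

lemma finsum_ring_truncate [simp]: "finsum (ring.truncate K) = finsum K"
  by (auto simp: fun_eq_iff finprod_def finsum_def)

lemma nat_pow_ring_truncate [simp]: "pow (ring.truncate K) = (pow K :: _ \<Rightarrow> nat \<Rightarrow> _)"
  by (auto simp: fun_eq_iff nat_pow_def)

lemma add_pow_ring_truncate [simp]: "add_pow (ring.truncate K) = (add_pow K :: nat \<Rightarrow> _)"
  by (auto simp: fun_eq_iff add_pow_def nat_pow_def)

lemma field_ring_truncate:
  assumes "field K"
  shows "field (ring.truncate K)"
proof -
  interpret field K by fact
  have "cring (ring.truncate K)"
    by (unfold_locales) (auto simp: Units_def a_ac m_ac l_distr r_distr intro: l_neg)
  then show ?thesis
    by (rule cring.cring_fieldI2) (auto intro: Units_r_inv_ex simp: field_Units)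
qed

lemma dpoly_eval_ring_truncate [simp]: "dpoly_eval (ring.truncate K) = dpoly_eval K"
  by (auto simp: fun_eq_iff dpoly_eval_def dmono_val_def)

lemma (in ring) finsum_in_subring:
  assumes "subring S R" and "f \<in> A \<rightarrow> S"
  shows "finsum R f A \<in> S"
proof (cases "finite A")
  case True
  from this assms(2) show ?thesis
  proof (induction A rule: finite_induct)
    case (insert a A)
    then show ?case
      using subringE[OF assms(1)] by (subst finsum_insert) (auto simp: Pi_def)
  qed (use subringE(2)[OF assms(1)] in simp)
qed (use subringE(2)[OF assms(1)] in simp)

lemma (in cring) finprod_in_subring:
  assumes "subring S R" and "f \<in> A \<rightarrow> S"
  shows "finprod R f A \<in> S"
proof (cases "finite A")
  case True
  from this assms(2) show ?thesis
  proof (induction A rule: finite_induct)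
    case (insert a A)
    then show ?case
      using subringE[OF assms(1)] by (subst finprod_insert) (auto simp: Pi_def)
  qed (use subringE(3)[OF assms(1)] in simp)
qed (use subringE(3)[OF assms(1)] in simp)

lemma (in ring) nat_pow_in_subring:
  assumes "subring S R" and "x \<in> S"
  shows "x [^] (n::nat) \<in> S"
  using subringE[OF assms(1)] assms(2) by (induction n) auto

lemma (in abelian_monoid) finsum_swap:
  assumes "finite A" and "finite B" and "\<And>a b. a \<in> A \<Longrightarrow> b \<in> B \<Longrightarrow> f a b \<in> carrier G"
  shows "(\<Oplus>a\<in>A. \<Oplus>b\<in>B. f a b) = (\<Oplus>b\<in>B. \<Oplus>a\<in>A. f a b)"
  using assms(1,3)
proof (induction A rule: finite_induct)
  case (insert x A)
  then have "(\<Oplus>a\<in>insert x A. \<Oplus>b\<in>B. f a b) = (\<Oplus>b\<in>B. f x b) \<oplus> (\<Oplus>b\<in>B. \<Oplus>a\<in>A. f a b)"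
    by (simp add: Pi_def)
  also have "\<dots> = (\<Oplus>b\<in>B. f x b \<oplus> (\<Oplus>a\<in>A. f a b))"
    using insert by (intro finsum_addf [symmetric]) (auto simp: Pi_def)
  also have "\<dots> = (\<Oplus>b\<in>B. \<Oplus>a\<in>insert x A. f a b)"
    using insert by (intro finsum_cong') (auto simp: Pi_def)
  finally show ?case .
qed (simp add: finsum_zero)

lemma (in cring) finsum_bilinear_swap:
  assumes "finite A" and "finite B"
    and "\<And>a b. a \<in> A \<Longrightarrow> b \<in> B \<Longrightarrow> g a b \<in> carrier R"
    and "\<And>a. a \<in> A \<Longrightarrow> x a \<in> carrier R" and "\<And>b. b \<in> B \<Longrightarrow> y b \<in> carrier R"
  shows "(\<Oplus>a\<in>A. (\<Oplus>b\<in>B. g a b \<otimes> y b) \<otimes> x a) = (\<Oplus>b\<in>B. (\<Oplus>a\<in>A. g a b \<otimes> x a) \<otimes> y b)"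
proof -
  have "(\<Oplus>b\<in>B. g a b \<otimes> y b) \<otimes> x a = (\<Oplus>b\<in>B. g a b \<otimes> x a \<otimes> y b)" if "a \<in> A" for a
  proof -
    have "(\<Oplus>b\<in>B. g a b \<otimes> y b) \<otimes> x a = (\<Oplus>b\<in>B. g a b \<otimes> y b \<otimes> x a)"
      using assms that by (intro finsum_ldistr) auto
    also have "\<dots> = (\<Oplus>b\<in>B. g a b \<otimes> x a \<otimes> y b)"
      using assms that by (intro finsum_cong') (auto simp: m_ac)
    finally show ?thesis .
  qed
  then have "(\<Oplus>a\<in>A. (\<Oplus>b\<in>B. g a b \<otimes> y b) \<otimes> x a) = (\<Oplus>a\<in>A. \<Oplus>b\<in>B. g a b \<otimes> x a \<otimes> y b)"
    using assms by (intro finsum_cong') auto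
  also have "\<dots> = (\<Oplus>b\<in>B. \<Oplus>a\<in>A. g a b \<otimes> x a \<otimes> y b)"
    using assms by (intro finsum_swap) auto
  also have "\<dots> = (\<Oplus>b\<in>B. (\<Oplus>a\<in>A. g a b \<otimes> x a) \<otimes> y b)"
    using assms by (intro finsum_cong' refl) (auto simp: finsum_ldistr)
  finally show ?thesis .
qed

section \<open>Linear independence over subfields\<close>

context field
begin

definition lin_indep_over :: "'a set \<Rightarrow> 'a set \<Rightarrow> bool" where
  "lin_indep_over F B \<longleftrightarrow> finite B \<and> B \<subseteq> carrier R \<and>
     (\<forall>g \<in> B \<rightarrow> F. (\<Oplus>b\<in>B. g b \<otimes> b) = \<zero> \<longrightarrow> (\<forall>b\<in>B. g b = \<zero>))"

lemma lin_indep_overD: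
  assumes "lin_indep_over F B" and "g \<in> B \<rightarrow> F" and "(\<Oplus>b\<in>B. g b \<otimes> b) = \<zero>" and "b \<in> B"
  shows "g b = \<zero>"
  using assms unfolding lin_indep_over_def by blast

lemma lin_combination_of_member:
  assumes "subfield F R" and "finite B" and "B \<subseteq> carrier R" and "a \<in> B"
  shows "\<exists>g \<in> B \<rightarrow> F. a = (\<Oplus>b\<in>B. g b \<otimes> b)"
proof
  let ?g = "\<lambda>b. if b = a then \<one> else \<zero>"
  show "?g \<in> B \<rightarrow> F"
    using subringE(2,3)[OF subfieldE(1)[OF assms(1)]] by auto
  have "(\<Oplus>b\<in>B. ?g b \<otimes> b) = (\<Oplus>b\<in>B. if b = a then b else \<zero>)"
    using assms(3) by (intro finsum_cong') auto
  also have "\<dots> = a"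
    using add.finprod_singleton_swap[OF assms(4,2), of "\<lambda>b. b"] assms(3,4) by auto
  finally show "a = (\<Oplus>b\<in>B. ?g b \<otimes> b)" ..
qed

lemma lin_combination_of_dependent_insert:
  assumes F: "subfield F R" and indep: "lin_indep_over F B" and a: "a \<in> carrier R" "a \<notin> B"
    and dep: "\<not> lin_indep_over F (insert a B)"
  shows "\<exists>h \<in> B \<rightarrow> F. a = (\<Oplus>b\<in>B. h b \<otimes> b)"
proof -
  have finB: "finite B" and Bc: "B \<subseteq> carrier R"
    using indep unfolding lin_indep_over_def by auto
  note Fsub = subringE[OF subfieldE(1)[OF F]]
  obtain g where g: "g \<in> insert a B \<rightarrow> F" and rel: "(\<Oplus>b\<in>insert a B. g b \<otimes> b) = \<zero>"
    and nonzero: "\<exists>b\<in>insert a B. g b \<noteq> \<zero>"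
    using dep finB Bc a unfolding lin_indep_over_def by auto
  have gc: "g b \<in> carrier R" if "b \<in> insert a B" for b
    using g that Fsub(1) by blast
  let ?s = "\<Oplus>b\<in>B. g b \<otimes> b"
  have sc: "?s \<in> carrier R"
    using gc Bc by (intro finsum_closed) auto
  have rel': "g a \<otimes> a \<oplus> ?s = \<zero>"
    using rel finB a gc Bc by (subst (asm) finsum_insert) (auto simp: Pi_def)
  have ga: "g a \<noteq> \<zero>"
  proof
    assume "g a = \<zero>"
    then have "?s = \<zero>"
      using rel' sc a by simp
    then have "\<forall>b\<in>B. g b = \<zero>"
      using indep g unfolding lin_indep_over_def by auto
    with nonzero \<open>g a = \<zero>\<close> show False
      by auto
  qed
  have inv_ga: "inv (g a) \<in> F" "inv (g a) \<otimes> g a = \<one>"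
    using subfield_m_inv[OF F, of "g a"] g ga by auto
  define h where "h b = (\<ominus> (inv (g a))) \<otimes> g b" for b
  have "h \<in> B \<rightarrow> F"
    using g inv_ga(1) Fsub(5,6) unfolding h_def by blast
  moreover have "(\<Oplus>b\<in>B. h b \<otimes> b) = a"
  proof -
    have ic: "inv (g a) \<in> carrier R"
      using inv_ga(1) Fsub(1) by blast
    have "(\<Oplus>b\<in>B. h b \<otimes> b) = (\<ominus> (inv (g a))) \<otimes> ?s"
      using gc Bc ic finB unfolding h_def
      by (subst finsum_rdistr) (auto simp: m_assoc intro!: finsum_cong')
    also have "?s = \<ominus> (g a \<otimes> a)"
      using rel' sc gc a by (metis add.inv_equality add.m_comm insertI1 m_closed)
    also have "(\<ominus> (inv (g a))) \<otimes> (\<ominus> (g a \<otimes> a)) = inv (g a) \<otimes> g a \<otimes> a"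
      using ic gc[of a] a by (simp add: l_minus r_minus m_assoc)
    finally show ?thesis
      using inv_ga(2) a by simp
  qed
  ultimately show ?thesis
    by auto
qed

lemma lin_relation_normalize:
  assumes F: "subfield F R" and g: "g \<in> E \<rightarrow> F" and E: "finite E" "E \<subseteq> carrier R"
    and rel: "(\<Oplus>e\<in>E. g e \<otimes> e) = \<zero>" and e0: "e0 \<in> E" "g e0 \<noteq> \<zero>"
  obtains h where "h \<in> E \<rightarrow> F" and "h e0 = \<one>" and "\<And>e. e \<in> E \<Longrightarrow> h e = \<zero> \<longleftrightarrow> g e = \<zero>"
    and "(\<Oplus>e\<in>E. h e \<otimes> e) = \<zero>"
proof -
  note F_ring = subringE[OF subfieldE(1)[OF F]]
  have g_closed: "g e \<in> carrier R" if "e \<in> E" for e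
    using g that F_ring(1) by auto
  have inv_g0: "inv (g e0) \<in> F" "inv (g e0) \<otimes> g e0 = \<one>" "inv (g e0) \<noteq> \<zero>"
    using subfield_m_inv[OF F, of "g e0"] g e0 by auto
  have inv_g0_closed: "inv (g e0) \<in> carrier R"
    using inv_g0(1) F_ring(1) by blast
  define h where "h e = inv (g e0) \<otimes> g e" for e
  show ?thesis
  proof (rule that)
    show "h \<in> E \<rightarrow> F"
      using g inv_g0(1) F_ring(6) unfolding h_def by auto
    show "h e0 = \<one>"
      using inv_g0(2) unfolding h_def .
    show "h e = \<zero> \<longleftrightarrow> g e = \<zero>" if "e \<in> E" for e
      unfolding h_def using integral_iff[OF inv_g0_closed g_closed[OF that]] inv_g0(3) by simp
    have "(\<Oplus>e\<in>E. h e \<otimes> e) = inv (g e0) \<otimes> (\<Oplus>e\<in>E. g e \<otimes> e)"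
      using E g_closed inv_g0_closed unfolding h_def
      by (subst finsum_rdistr) (auto simp: m_assoc subset_iff intro!: finsum_cong')
    then show "(\<Oplus>e\<in>E. h e \<otimes> e) = \<zero>"
      using rel inv_g0_closed by simp
  qed
qed

lemma exists_lin_indep_spanning_subset:
  assumes F: "subfield F R" and "finite A" and "A \<subseteq> carrier R"
  shows "\<exists>B\<subseteq>A. lin_indep_over F B \<and> (\<forall>a\<in>A. \<exists>g \<in> B \<rightarrow> F. a = (\<Oplus>b\<in>B. g b \<otimes> b))"
proof -
  define I where "I = {B. B \<subseteq> A \<and> lin_indep_over F B}"
  have "finite I"
    unfolding I_def using assms(2) by simp
  moreover have "{} \<in> I"
    unfolding I_def lin_indep_over_def by simp
  ultimately have "Max (card ` I) \<in> card ` I"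
    by (intro Max_in) auto
  then obtain B where B: "B \<in> I" and "card B = Max (card ` I)"
    by auto
  then have maximal: "card B' \<le> card B" if "B' \<in> I" for B'
    using \<open>finite I\<close> that by simp
  from B have BA: "B \<subseteq> A" and indep: "lin_indep_over F B"
    unfolding I_def by auto
  have finB: "finite B" and Bc: "B \<subseteq> carrier R"
    using indep unfolding lin_indep_over_def by auto
  have "\<exists>g \<in> B \<rightarrow> F. a = (\<Oplus>b\<in>B. g b \<otimes> b)" if a: "a \<in> A" for a
  proof (cases "a \<in> B")
    case True
    then show ?thesis
      using lin_combination_of_member[OF F finB Bc] by blast
  next
    case False
    then have "insert a B \<notin> I"
      using maximal[of "insert a B"] finB by auto
    then have "\<not> lin_indep_over F (insert a B)"
      using a BA unfolding I_def by auto
    then show ?thesis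
      using lin_combination_of_dependent_insert[OF F indep _ False] a assms(3) by blast
  qed
  with BA indep show ?thesis
    by blast
qed

lemma exists_basis_expansion:
  assumes F: "subfield F R" and "finite A" and "x ` A \<subseteq> carrier R"
  obtains E G where "E \<subseteq> x ` A" and "lin_indep_over F E"
    and "\<And>a. a \<in> A \<Longrightarrow> G a \<in> E \<rightarrow> F" and "\<And>a. a \<in> A \<Longrightarrow> x a = (\<Oplus>e\<in>E. G a e \<otimes> e)"
proof -
  from exists_lin_indep_spanning_subset[OF F finite_imageI[OF \<open>finite A\<close>] assms(3)] obtain E
    where E: "E \<subseteq> x ` A" "lin_indep_over F E"
      and span: "\<forall>y\<in>x ` A. \<exists>g \<in> E \<rightarrow> F. y = (\<Oplus>e\<in>E. g e \<otimes> e)"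
    by blast
  have "\<forall>a\<in>A. \<exists>g. g \<in> E \<rightarrow> F \<and> x a = (\<Oplus>e\<in>E. g e \<otimes> e)"
    using span by blast
  from bchoice[OF this] obtain G where "\<forall>a\<in>A. G a \<in> E \<rightarrow> F \<and> x a = (\<Oplus>e\<in>E. G a e \<otimes> e)"
    by blast
  with E show ?thesis
    using that by blast
qed

lemma tower_lin_combination_eq_zero:
  assumes S: "subring S R" and "F \<subseteq> S" and B: "B \<subseteq> S" "lin_indep_over F B" and E: "lin_indep_over S E"
    and G: "\<And>b e. b \<in> B \<Longrightarrow> e \<in> E \<Longrightarrow> G b e \<in> F"
    and rel: "(\<Oplus>b\<in>B. (\<Oplus>e\<in>E. G b e \<otimes> e) \<otimes> b) = \<zero>"
    and "b \<in> B" and "e \<in> E"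
  shows "G b e = \<zero>"
proof -
  have finB: "finite B" and Bc: "B \<subseteq> carrier R" and finE: "finite E" and Ec: "E \<subseteq> carrier R"
    using B(2) E unfolding lin_indep_over_def by auto
  have G_S: "G b e \<in> S" if "b \<in> B" "e \<in> E" for b e
    using G[OF that] \<open>F \<subseteq> S\<close> by blast
  have G_closed: "G b e \<in> carrier R" if "b \<in> B" "e \<in> E" for b e
    using G_S[OF that] subringE(1)[OF S] by blast
  have "(\<Oplus>e\<in>E. (\<Oplus>b\<in>B. G b e \<otimes> b) \<otimes> e) = (\<Oplus>b\<in>B. (\<Oplus>e\<in>E. G b e \<otimes> e) \<otimes> b)"
    using finE finB Ec Bc G_closed by (intro finsum_bilinear_swap) auto
  then have "(\<Oplus>e\<in>E. (\<Oplus>b\<in>B. G b e \<otimes> b) \<otimes> e) = \<zero>"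
    using rel by simp
  moreover have "(\<lambda>e. \<Oplus>b\<in>B. G b e \<otimes> b) \<in> E \<rightarrow> S"
    using G_S B(1) subringE(6)[OF S] by (auto intro!: finsum_in_subring[OF S])
  ultimately have "(\<Oplus>b\<in>B. G b e \<otimes> b) = \<zero>"
    using lin_indep_overD[OF E] \<open>e \<in> E\<close> by blast
  moreover have "(\<lambda>b. G b e) \<in> B \<rightarrow> F"
    using G \<open>e \<in> E\<close> by blast
  ultimately show ?thesis
    using lin_indep_overD[OF B(2)] \<open>b \<in> B\<close> by blast
qed

end

section \<open>Components of differential polynomials\<close>

lemma dpolysD:
  assumes "P \<in> dpolys T \<Delta> r"
  shows "finite (fst P)" and "\<And>m. m \<in> fst P \<Longrightarrow> \<forall>v\<in>Poly_Mapping.keys m. fst v < r \<and> set (snd v) \<subseteq> \<Delta>"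
    and "\<And>m. m \<in> fst P \<Longrightarrow> snd P m \<in> T"
  using assms unfolding dpolys_def by fastforce+

lemma dpolys_mono: "F \<subseteq> F' \<Longrightarrow> \<Theta> \<subseteq> \<Delta> \<Longrightarrow> dpolys F \<Theta> r \<subseteq> dpolys F' \<Delta> r"
  unfolding dpolys_def by fastforce

text \<open>
  With \<gamma> a b the coordinate of the coefficient a at the basis element b, the b-th component keeps
  only the monomials whose derivatives all lie in \<Theta>; the others vanish at \<Lambda>-constants when
  \<Theta> = \<Delta> - \<Lambda>.
\<close>

definition dpoly_component ::
    "'d set \<Rightarrow> ('c \<Rightarrow> 'e \<Rightarrow> 'c) \<Rightarrow> 'd dmono set \<times> ('d dmono \<Rightarrow> 'c) \<Rightarrow> 'e \<Rightarrow> 'd dmono set \<times> ('d dmono \<Rightarrow> 'c)"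
  where "dpoly_component \<Theta> \<gamma> P b =
    ({m \<in> fst P. \<forall>v\<in>Poly_Mapping.keys m. set (snd v) \<subseteq> \<Theta>}, \<lambda>m. \<gamma> (snd P m) b)"

lemma dpoly_component_in_dpolys:
  assumes "P \<in> dpolys T \<Delta> r" and "\<And>m. m \<in> fst P \<Longrightarrow> \<gamma> (snd P m) b \<in> F"
  shows "dpoly_component \<Theta> \<gamma> P b \<in> dpolys F \<Theta> r"
  using assms by (auto simp: dpolys_def dpoly_component_def)

section \<open>Constants of a differential field\<close>

locale differential_field =
  fixes K :: "('a, 'b) ring_scheme" (structure) and \<Delta> :: "'d set" and D :: "'d \<Rightarrow> 'a \<Rightarrow> 'a"
  assumes diff_field: "diff_field K \<Delta> D"

sublocale differential_field \<subseteq> field K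
  using diff_field unfolding diff_field_def by blast

context differential_field
begin

lemma D_closed [simp]: "d \<in> \<Delta> \<Longrightarrow> x \<in> carrier K \<Longrightarrow> D d x \<in> carrier K"
  using diff_field unfolding diff_field_def derivation_def by blast

lemma D_add: "d \<in> \<Delta> \<Longrightarrow> x \<in> carrier K \<Longrightarrow> y \<in> carrier K \<Longrightarrow> D d (x \<oplus> y) = D d x \<oplus> D d y"
  using diff_field unfolding diff_field_def derivation_def by blast

lemma D_mult:
  "d \<in> \<Delta> \<Longrightarrow> x \<in> carrier K \<Longrightarrow> y \<in> carrier K \<Longrightarrow> D d (x \<otimes> y) = D d x \<otimes> y \<oplus> x \<otimes> D d y"
  using diff_field unfolding diff_field_def derivation_def by blast

lemma D_commute: "d \<in> \<Delta> \<Longrightarrow> e \<in> \<Delta> \<Longrightarrow> x \<in> carrier K \<Longrightarrow> D d (D e x) = D e (D d x)"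
  using diff_field unfolding diff_field_def by blast

lemma D_zero [simp]: "d \<in> \<Delta> \<Longrightarrow> D d \<zero> = \<zero>"
  using D_add[of d \<zero> \<zero>] by (metis D_closed add.l_cancel_one' zero_closed)

lemma D_one [simp]: "d \<in> \<Delta> \<Longrightarrow> D d \<one> = \<zero>"
  using D_mult[of d \<one> \<one>] by (metis D_closed add.l_cancel_one' l_one one_closed r_one)

lemma D_minus: "d \<in> \<Delta> \<Longrightarrow> x \<in> carrier K \<Longrightarrow> D d (\<ominus> x) = \<ominus> D d x"
  using D_add[of d "\<ominus> x" x] by (metis D_closed D_zero a_inv_closed add.inv_equality l_neg)

lemma D_inv_of_constant:
  assumes "d \<in> \<Delta>" and "x \<in> carrier K" and "x \<noteq> \<zero>" and "D d x = \<zero>"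
  shows "D d (inv x) = \<zero>"
proof -
  have x: "x \<in> Units K"
    using assms(2,3) field_Units by blast
  then have "x \<otimes> D d (inv x) = D d (x \<otimes> inv x)"
    using assms D_mult[of d x "inv x"] by simp
  also have "\<dots> = \<zero>"
    using x assms(1) by simp
  finally show ?thesis
    using x assms integral by (metis D_closed Units_inv_closed)
qed

lemma D_finsum:
  assumes "d \<in> \<Delta>" and "f \<in> A \<rightarrow> carrier K"
  shows "D d (\<Oplus>a\<in>A. f a) = (\<Oplus>a\<in>A. D d (f a))"
proof (cases "finite A")
  case True
  from this assms(2) show ?thesis
    by (induction A rule: finite_induct) (auto simp: assms(1) D_add Pi_def)
qed (simp add: assms(1))

lemma D_lin_combination_of_constants:
  assumes "d \<in> \<Delta>" and "h \<in> E \<rightarrow> carrier K" and "E \<subseteq> carrier K" and "\<And>e. e \<in> E \<Longrightarrow> D d e = \<zero>"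
  shows "D d (\<Oplus>e\<in>E. h e \<otimes> e) = (\<Oplus>e\<in>E. D d (h e) \<otimes> e)"
  using assms by (auto simp: D_finsum D_mult Pi_def subset_iff intro!: finsum_cong')

lemma diff_subfield_carrier: "diff_subfield K \<Delta> D (carrier K)"
  unfolding diff_subfield_def using carrier_is_subfield by auto

lemma constants_subfield:
  assumes "subfield S K" and "\<Lambda> \<subseteq> \<Delta>"
  shows "subfield (constants K \<Lambda> D S) K"
proof (rule subfieldI')
  note S = subringE[OF subfieldE(1)[OF assms(1)]]
  show "subring (constants K \<Lambda> D S) K"
    using S assms(2) by (intro subringI) (auto simp: constants_def subset_iff D_add D_mult D_minus)
  show "inv c \<in> constants K \<Lambda> D S" if "c \<in> constants K \<Lambda> D S - {\<zero>}" for c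
    using that subfield_m_inv(1)[OF assms(1)] S(1) assms(2)
    by (auto simp: constants_def subset_iff intro: D_inv_of_constant)
qed

lemma diff_ext_ring_truncate:
  assumes "\<Theta> \<subseteq> \<Delta>" and "S \<subseteq> carrier K"
  shows "diff_ext K \<Theta> D S (ring.truncate K) D id"
  using diff_field field_ring_truncate finite_subset assms
  unfolding diff_ext_def diff_field_def char_zero_def derivation_def ring_hom_def
  by (auto simp: subset_iff)

lemma diff_closed_solution:
  assumes closed: "diff_closed K \<Theta> D C" and "\<Theta> \<subseteq> \<Delta>" and "C \<subseteq> carrier K"
    and "finite Ps" and "Ps \<subseteq> dpolys C \<Theta> r" and "Q \<in> dpolys C \<Theta> r"
    and \<eta>: "\<And>i. i < r \<Longrightarrow> \<eta> i \<in> carrier K"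
    and Ps_\<eta>: "\<forall>P\<in>Ps. dpoly_eval K D id P \<eta> = \<zero>" and Q_\<eta>: "dpoly_eval K D id Q \<eta> \<noteq> \<zero>"
  obtains \<zeta> where "\<And>i. i < r \<Longrightarrow> \<zeta> i \<in> C"
    and "\<forall>P\<in>Ps. dpoly_eval K D id P \<zeta> = \<zero>" and "dpoly_eval K D id Q \<zeta> \<noteq> \<zero>"
proof -
  have "\<exists>(E::'a ring) DE \<phi> \<zeta>. diff_ext K \<Theta> D C E DE \<phi> \<and> (\<forall>i<r. \<zeta> i \<in> carrier E) \<and>
      (\<forall>P\<in>Ps. dpoly_eval E DE \<phi> P \<zeta> = \<zero>\<^bsub>E\<^esub>) \<and> dpoly_eval E DE \<phi> Q \<zeta> \<noteq> \<zero>\<^bsub>E\<^esub>"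
    using diff_ext_ring_truncate[OF assms(2,3)] \<eta> Ps_\<eta> Q_\<eta> by (intro exI[of _ "ring.truncate K"] exI[of _ D] exI[of _ id] exI[of _ \<eta>]) auto
  then have "\<exists>\<zeta>. (\<forall>i<r. \<zeta> i \<in> C) \<and> (\<forall>P\<in>Ps. dpoly_eval K D id P \<zeta> = \<zero>) \<and> dpoly_eval K D id Q \<zeta> \<noteq> \<zero>"
    using closed assms(4-6) unfolding diff_closed_def by blast
  then show ?thesis
    using that by blast
qed

context
  fixes S :: "'a set" and \<Lambda> :: "'d set"
  assumes S: "diff_subfield K \<Delta> D S" and \<Lambda>: "\<Lambda> \<subseteq> \<Delta>"
begin

lemma diff_subfield_subset_carrier: "S \<subseteq> carrier K"
  using S subfieldE(3) unfolding diff_subfield_def by blast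

lemma constants_closed: "x \<in> constants K \<Lambda> D S \<Longrightarrow> x \<in> carrier K"
  using diff_subfield_subset_carrier unfolding constants_def by blast

lemma foldr_D_in_constants:
  assumes "x \<in> constants K \<Lambda> D S" and "set ds \<subseteq> \<Delta>"
  shows "foldr D ds x \<in> constants K \<Lambda> D S"
  using assms(2)
proof (induction ds)
  case (Cons e ds)
  then have y: "foldr D ds x \<in> constants K \<Lambda> D S" and e: "e \<in> \<Delta>"
    by auto
  then have "D e (foldr D ds x) \<in> S"
    using S unfolding diff_subfield_def constants_def by blast
  moreover have "D d (D e (foldr D ds x)) = \<zero>" if "d \<in> \<Lambda>" for d
    using that y e \<Lambda> constants_closed[OF y] D_commute[of d e] by (auto simp: constants_def)
  ultimately show ?case
    by (simp add: constants_def)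
qed (use assms(1) in simp)

lemma foldr_D_eq_zero:
  assumes "x \<in> constants K \<Lambda> D S" and "set ds \<subseteq> \<Delta>" and "set ds \<inter> \<Lambda> \<noteq> {}"
  shows "foldr D ds x = \<zero>"
  using assms(2,3)
proof (induction ds)
  case (Cons e ds)
  show ?case
  proof (cases "e \<in> \<Lambda>")
    case True
    then show ?thesis
      using foldr_D_in_constants[OF assms(1)] Cons.prems by (simp add: constants_def)
  next
    case False
    then show ?thesis
      using Cons by auto
  qed
qed simp

context
  fixes r :: nat and \<eta> :: "nat \<Rightarrow> 'a"
  assumes \<eta>: "\<And>i. i < r \<Longrightarrow> \<eta> i \<in> constants K \<Lambda> D S"
begin

lemma dvar_val_in_constants:
  "fst v < r \<Longrightarrow> set (snd v) \<subseteq> \<Delta> \<Longrightarrow> dvar_val D \<eta> v \<in> constants K \<Lambda> D S"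
  unfolding dvar_val_def using \<eta> foldr_D_in_constants by blast

lemma dmono_val_in_constants:
  assumes "\<forall>v\<in>Poly_Mapping.keys m. fst v < r \<and> set (snd v) \<subseteq> \<Delta>"
  shows "dmono_val K D \<eta> m \<in> constants K \<Lambda> D S"
proof -
  have C: "subring (constants K \<Lambda> D S) K"
    using constants_subfield S \<Lambda> subfieldE(1) unfolding diff_subfield_def by blast
  show ?thesis
    unfolding dmono_val_def
    using assms dvar_val_in_constants by (auto intro!: finprod_in_subring[OF C] nat_pow_in_subring[OF C])
qed

lemma dmono_val_eq_zero:
  assumes "\<forall>v\<in>Poly_Mapping.keys m. fst v < r \<and> set (snd v) \<subseteq> \<Delta>"
    and "v \<in> Poly_Mapping.keys m" and "set (snd v) \<inter> \<Lambda> \<noteq> {}"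
  shows "dmono_val K D \<eta> m = \<zero>"
proof -
  let ?f = "\<lambda>v. dvar_val D \<eta> v [^] Poly_Mapping.lookup m v"
  have f: "?f \<in> Poly_Mapping.keys m \<rightarrow> carrier K"
    using assms(1) dvar_val_in_constants constants_closed by auto
  have "dvar_val D \<eta> v = \<zero>"
    unfolding dvar_val_def using assms \<eta> foldr_D_eq_zero by blast
  moreover have "Poly_Mapping.lookup m v \<noteq> 0"
    using assms(2) by (simp add: in_keys_iff)
  ultimately have "?f v = \<zero>"
    by (simp add: nat_pow_zero)
  moreover have "finprod K ?f (Poly_Mapping.keys m) = ?f v \<otimes> finprod K ?f (Poly_Mapping.keys m - {v})"
  proof -
    have "?f \<in> Poly_Mapping.keys m - {v} \<rightarrow> carrier K" and "?f v \<in> carrier K"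
      using f assms(2) by auto
    from finprod_insert[OF _ _ this] show ?thesis
      using assms(2) by (simp add: insert_absorb)
  qed
  ultimately show ?thesis
    unfolding dmono_val_def using f by (simp add: Pi_def)
qed

lemma dpoly_eval_in_constants:
  assumes "P \<in> dpolys (constants K \<Lambda> D S) \<Delta> r"
  shows "dpoly_eval K D id P \<eta> \<in> constants K \<Lambda> D S"
proof -
  have C: "subring (constants K \<Lambda> D S) K"
    using constants_subfield S \<Lambda> subfieldE(1) unfolding diff_subfield_def by blast
  show ?thesis
    unfolding dpoly_eval_def using assms subringE(6)[OF C] dmono_val_in_constants
    by (auto simp: dpolys_def intro!: finsum_in_subring[OF C])
qed

lemma dpoly_eval_drop_vanishing_monomials:
  assumes P: "P \<in> dpolys T \<Delta> r" and c: "\<And>m. m \<in> fst P \<Longrightarrow> snd P m \<in> carrier K"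
  shows "dpoly_eval K D id P \<eta> =
    (\<Oplus>m\<in>{m \<in> fst P. \<forall>v\<in>Poly_Mapping.keys m. set (snd v) \<subseteq> \<Delta> - \<Lambda>}. snd P m \<otimes> dmono_val K D \<eta> m)"
  unfolding dpoly_eval_def id_apply
proof (rule add.finprod_mono_neutral_cong_left[symmetric])
  note keys = dpolysD(2)[OF P]
  have \<mu>: "dmono_val K D \<eta> m \<in> carrier K" if "m \<in> fst P" for m
    using dmono_val_in_constants[OF keys[OF that]] constants_closed by blast
  show "(\<lambda>m. snd P m \<otimes> dmono_val K D \<eta> m) \<in> fst P \<rightarrow> carrier K"
    using c \<mu> by auto
  show "snd P m \<otimes> dmono_val K D \<eta> m = \<zero>"
    if m: "m \<in> fst P - {m \<in> fst P. \<forall>v\<in>Poly_Mapping.keys m. set (snd v) \<subseteq> \<Delta> - \<Lambda>}" for m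
  proof -
    obtain v where v: "v \<in> Poly_Mapping.keys m" and "\<not> set (snd v) \<subseteq> \<Delta> - \<Lambda>"
      using m by auto
    then have "set (snd v) \<inter> \<Lambda> \<noteq> {}"
      using keys[of m] m by auto
    then have "dmono_val K D \<eta> m = \<zero>"
      using dmono_val_eq_zero[OF keys v] m by blast
    then show ?thesis
      using c m by simp
  qed
qed (use dpolysD(1)[OF P] in auto)

lemma dpoly_eval_component_sum:
  assumes P: "P \<in> dpolys T \<Delta> r" and B: "finite B" "B \<subseteq> carrier K"
    and \<gamma>: "\<And>m b. m \<in> fst P \<Longrightarrow> b \<in> B \<Longrightarrow> \<gamma> (snd P m) b \<in> carrier K"
    and coeff: "\<And>m. m \<in> fst P \<Longrightarrow> snd P m = (\<Oplus>b\<in>B. \<gamma> (snd P m) b \<otimes> b)"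
  shows "dpoly_eval K D id P \<eta> = (\<Oplus>b\<in>B. dpoly_eval K D id (dpoly_component (\<Delta> - \<Lambda>) \<gamma> P b) \<eta> \<otimes> b)"
proof -
  let ?M = "{m \<in> fst P. \<forall>v\<in>Poly_Mapping.keys m. set (snd v) \<subseteq> \<Delta> - \<Lambda>}"
  let ?\<mu> = "dmono_val K D \<eta>"
  have finM: "finite ?M"
    using dpolysD(1)[OF P] by simp
  have \<mu>: "?\<mu> m \<in> carrier K" if "m \<in> fst P" for m
    using dmono_val_in_constants[OF dpolysD(2)[OF P that]] constants_closed by blast
  have c: "snd P m \<in> carrier K" if "m \<in> fst P" for m
  proof -
    have "(\<Oplus>b\<in>B. \<gamma> (snd P m) b \<otimes> b) \<in> carrier K"
      using \<gamma>[OF that] B(2) by (intro finsum_closed) auto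
    then show ?thesis
      using coeff[OF that] by simp
  qed
  have "dpoly_eval K D id P \<eta> = (\<Oplus>m\<in>?M. snd P m \<otimes> ?\<mu> m)"
    by (rule dpoly_eval_drop_vanishing_monomials[OF P c])
  also have "\<dots> = (\<Oplus>m\<in>?M. (\<Oplus>b\<in>B. \<gamma> (snd P m) b \<otimes> b) \<otimes> ?\<mu> m)"
    using c \<mu> coeff by (intro finsum_cong') auto
  also have "\<dots> = (\<Oplus>b\<in>B. (\<Oplus>m\<in>?M. \<gamma> (snd P m) b \<otimes> ?\<mu> m) \<otimes> b)"
    using finM B \<gamma> \<mu> by (intro finsum_bilinear_swap) auto
  also have "\<dots> = (\<Oplus>b\<in>B. dpoly_eval K D id (dpoly_component (\<Delta> - \<Lambda>) \<gamma> P b) \<eta> \<otimes> b)"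
    unfolding dpoly_eval_def dpoly_component_def by simp
  finally show ?thesis .
qed

lemma dpoly_eval_eq_zero_iff_components:
  assumes P: "P \<in> dpolys T \<Delta> r" and B: "lin_indep_over (constants K \<Lambda> D S) B"
    and \<gamma>: "\<And>m b. m \<in> fst P \<Longrightarrow> b \<in> B \<Longrightarrow> \<gamma> (snd P m) b \<in> constants K \<Lambda> D S"
    and coeff: "\<And>m. m \<in> fst P \<Longrightarrow> snd P m = (\<Oplus>b\<in>B. \<gamma> (snd P m) b \<otimes> b)"
  shows "dpoly_eval K D id P \<eta> = \<zero> \<longleftrightarrow>
    (\<forall>b\<in>B. dpoly_eval K D id (dpoly_component (\<Delta> - \<Lambda>) \<gamma> P b) \<eta> = \<zero>)"
proof -
  let ?e = "\<lambda>b. dpoly_eval K D id (dpoly_component (\<Delta> - \<Lambda>) \<gamma> P b) \<eta>"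
  have finB: "finite B" and Bc: "B \<subseteq> carrier K"
    using B unfolding lin_indep_over_def by auto
  have e: "?e \<in> B \<rightarrow> constants K \<Lambda> D S"
  proof
    fix b assume "b \<in> B"
    then have "dpoly_component (\<Delta> - \<Lambda>) \<gamma> P b \<in> dpolys (constants K \<Lambda> D S) \<Delta> r"
      using dpoly_component_in_dpolys[OF P, of \<gamma> b] \<gamma> dpolys_mono[of _ _ "\<Delta> - \<Lambda>" \<Delta>] by blast
    then show "?e b \<in> constants K \<Lambda> D S"
      by (rule dpoly_eval_in_constants)
  qed
  have expansion: "dpoly_eval K D id P \<eta> = (\<Oplus>b\<in>B. ?e b \<otimes> b)"
    using dpoly_eval_component_sum[OF P finB Bc _ coeff] \<gamma> constants_closed by blast
  show ?thesis
  proof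
    assume "dpoly_eval K D id P \<eta> = \<zero>"
    then show "\<forall>b\<in>B. ?e b = \<zero>"
      using lin_indep_overD[OF B e] expansion by simp
  next
    assume "\<forall>b\<in>B. ?e b = \<zero>"
    then have "(\<Oplus>b\<in>B. ?e b \<otimes> b) = (\<Oplus>b\<in>B. \<zero>)"
      using Bc by (intro finsum_cong') auto
    then show "dpoly_eval K D id P \<eta> = \<zero>"
      using expansion by simp
  qed
qed

end

section \<open>Linear independence of constants\<close>

lemma D_lin_relation_over_constants:
  assumes E: "E \<subseteq> constants K \<Lambda> D (carrier K)" and h: "h \<in> E \<rightarrow> S"
    and rel: "(\<Oplus>e\<in>E. h e \<otimes> e) = \<zero>" and d: "d \<in> \<Lambda>"
  shows "(\<lambda>e. D d (h e)) \<in> E \<rightarrow> S" and "(\<Oplus>e\<in>E. D d (h e) \<otimes> e) = \<zero>"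
proof -
  have d\<Delta>: "d \<in> \<Delta>"
    using d \<Lambda> by blast
  show "(\<lambda>e. D d (h e)) \<in> E \<rightarrow> S"
    using h d\<Delta> S unfolding diff_subfield_def by auto
  have "(\<Oplus>e\<in>E. D d (h e) \<otimes> e) = D d (\<Oplus>e\<in>E. h e \<otimes> e)"
    using d d\<Delta> E h diff_subfield_subset_carrier
    by (intro D_lin_combination_of_constants[symmetric]) (auto simp: constants_def)
  then show "(\<Oplus>e\<in>E. D d (h e) \<otimes> e) = \<zero>"
    using rel d\<Delta> by simp
qed

lemma constants_lin_indep_over_subfield:
  assumes E: "E \<subseteq> constants K \<Lambda> D (carrier K)" and indep: "lin_indep_over (constants K \<Lambda> D S) E"
  shows "lin_indep_over S E"
proof -
  have finE: "finite E" and Ec: "E \<subseteq> carrier K"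
    using indep unfolding lin_indep_over_def by auto
  have sub: "subfield S K"
    using S unfolding diff_subfield_def by blast
  have "\<forall>e\<in>E. g e = \<zero>" if "g \<in> E \<rightarrow> S" and "(\<Oplus>e\<in>E. g e \<otimes> e) = \<zero>" for g
    using that
  proof (induction "card {e\<in>E. g e \<noteq> \<zero>}" arbitrary: g rule: less_induct)
    case less
    show ?case
    proof (rule ccontr)
      assume "\<not> (\<forall>e\<in>E. g e = \<zero>)"
      then obtain e0 where e0: "e0 \<in> E" "g e0 \<noteq> \<zero>"
        by blast
      obtain h where h: "h \<in> E \<rightarrow> S" and h_e0: "h e0 = \<one>"
        and h_zero_iff: "\<And>e. e \<in> E \<Longrightarrow> h e = \<zero> \<longleftrightarrow> g e = \<zero>" and h_rel: "(\<Oplus>e\<in>E. h e \<otimes> e) = \<zero>"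
        using lin_relation_normalize[OF sub less.prems(1) finE Ec less.prems(2) e0] by blast
      \<comment> \<open>Differentiating the normalized relation kills the coefficient at e0, so minimality applies.\<close>
      have "\<forall>e\<in>E. D d (h e) = \<zero>" if d: "d \<in> \<Lambda>" for d
      proof -
        have "D d (h e) = \<zero>" if "e \<in> E" "g e = \<zero> \<or> e = e0" for e
          using that h_zero_iff[OF that(1)] h_e0 d \<Lambda> by (metis D_one D_zero subsetD)
        then have "{e\<in>E. D d (h e) \<noteq> \<zero>} \<subseteq> {e\<in>E. g e \<noteq> \<zero>} - {e0}"
          by blast
        then have "card {e\<in>E. D d (h e) \<noteq> \<zero>} \<le> card ({e\<in>E. g e \<noteq> \<zero>} - {e0})"
          using finE by (intro card_mono) auto
        also have "\<dots> < card {e\<in>E. g e \<noteq> \<zero>}"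
          using finE e0 by (intro card_Diff1_less) auto
        finally show ?thesis
          by (rule less.hyps[OF _ D_lin_relation_over_constants[OF E h h_rel d]])
      qed
      then have "h \<in> E \<rightarrow> constants K \<Lambda> D S"
        using h unfolding constants_def by auto
      then have "h e0 = \<zero>"
        using lin_indep_overD[OF indep _ h_rel e0(1)] by blast
      with h_e0 show False
        by simp
    qed
  qed
  then show ?thesis
    using finE Ec unfolding lin_indep_over_def by blast
qed

lemma lin_indep_over_constants_of_carrier:
  assumes B: "B \<subseteq> S" and indep: "lin_indep_over (constants K \<Lambda> D S) B"
  shows "lin_indep_over (constants K \<Lambda> D (carrier K)) B"
proof -
  let ?C = "constants K \<Lambda> D S" and ?C\<^sub>K = "constants K \<Lambda> D (carrier K)"
  have finB: "finite B" and Bc: "B \<subseteq> carrier K"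
    using indep unfolding lin_indep_over_def by auto
  have sub: "subfield S K"
    using S unfolding diff_subfield_def by blast
  have C: "subfield ?C K"
    by (rule constants_subfield[OF sub \<Lambda>])
  have "\<forall>b\<in>B. x b = \<zero>" if x: "x \<in> B \<rightarrow> ?C\<^sub>K" and x_rel: "(\<Oplus>b\<in>B. x b \<otimes> b) = \<zero>" for x
  proof -
    \<comment> \<open>Expand the x b in a basis E of their span over the constants of S; E stays independent over S.\<close>
    have "x ` B \<subseteq> carrier K"
      using x unfolding constants_def by auto
    with exists_basis_expansion[OF C finB] obtain E G
      where "E \<subseteq> x ` B" and E: "lin_indep_over ?C E"
        and G: "\<And>b. b \<in> B \<Longrightarrow> G b \<in> E \<rightarrow> ?C"
        and x_eq: "\<And>b. b \<in> B \<Longrightarrow> x b = (\<Oplus>e\<in>E. G b e \<otimes> e)"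
      by blast
    then have "E \<subseteq> ?C\<^sub>K"
      using x by blast
    then have E_S: "lin_indep_over S E"
      using E by (rule constants_lin_indep_over_subfield)
    have expansion: "(\<Oplus>b\<in>B. (\<Oplus>e\<in>E. G b e \<otimes> e) \<otimes> b) = (\<Oplus>b\<in>B. x b \<otimes> b)"
      using x_eq x Bc by (intro finsum_cong') (auto simp: constants_def)
    have G_zero: "G b e = \<zero>" if "b \<in> B" "e \<in> E" for b e
    proof (rule tower_lin_combination_eq_zero[OF subfieldE(1)[OF sub] _ B indep E_S _ _ that])
      show "?C \<subseteq> S"
        unfolding constants_def by blast
      show "G b' e' \<in> ?C" if "b' \<in> B" "e' \<in> E" for b' e'
        using G that by blast
      show "(\<Oplus>b\<in>B. (\<Oplus>e\<in>E. G b e \<otimes> e) \<otimes> b) = \<zero>"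
        using expansion x_rel by simp
    qed
    show ?thesis
    proof
      fix b assume "b \<in> B"
      then have "x b = (\<Oplus>e\<in>E. G b e \<otimes> e)"
        by (rule x_eq)
      also have "\<dots> = (\<Oplus>e\<in>E. \<zero>)"
        using \<open>b \<in> B\<close> G_zero E unfolding lin_indep_over_def by (intro finsum_cong') auto
      finally show "x b = \<zero>"
        by simp
    qed
  qed
  then show ?thesis
    using finB Bc unfolding lin_indep_over_def by blast
qed

lemma exists_coefficient_basis:
  assumes "finite Ps" and "Ps \<subseteq> dpolys S \<Delta> r"
  obtains B \<gamma> where "B \<subseteq> S" and "lin_indep_over (constants K \<Lambda> D S) B"
    and "\<And>P m b. P \<in> Ps \<Longrightarrow> m \<in> fst P \<Longrightarrow> b \<in> B \<Longrightarrow> \<gamma> (snd P m) b \<in> constants K \<Lambda> D S"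
    and "\<And>P m. P \<in> Ps \<Longrightarrow> m \<in> fst P \<Longrightarrow> snd P m = (\<Oplus>b\<in>B. \<gamma> (snd P m) b \<otimes> b)"
proof -
  define A where "A = (\<Union>P\<in>Ps. snd P ` fst P)"
  have coeff_A: "snd P m \<in> A" if "P \<in> Ps" "m \<in> fst P" for P m
    using that unfolding A_def by blast
  have "finite A" and "A \<subseteq> S"
    using assms unfolding A_def dpolys_def by auto
  moreover have sub: "subfield S K"
    using S unfolding diff_subfield_def by blast
  ultimately have "id ` A \<subseteq> carrier K"
    using subfieldE(3) by auto
  with exists_basis_expansion[OF constants_subfield[OF sub \<Lambda>] \<open>finite A\<close>] obtain B \<gamma>
    where "B \<subseteq> id ` A" and B: "lin_indep_over (constants K \<Lambda> D S) B"
      and \<gamma>: "\<And>a. a \<in> A \<Longrightarrow> \<gamma> a \<in> B \<rightarrow> constants K \<Lambda> D S"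
      and expansion: "\<And>a. a \<in> A \<Longrightarrow> id a = (\<Oplus>b\<in>B. \<gamma> a b \<otimes> b)"
    by blast
  show ?thesis
  proof (rule that[OF _ B])
    show "B \<subseteq> S"
      using \<open>B \<subseteq> id ` A\<close> \<open>A \<subseteq> S\<close> by auto
    show "\<gamma> (snd P m) b \<in> constants K \<Lambda> D S" if "P \<in> Ps" "m \<in> fst P" "b \<in> B" for P m b
      using \<gamma>[OF coeff_A[OF that(1,2)]] that(3) by blast
    show "snd P m = (\<Oplus>b\<in>B. \<gamma> (snd P m) b \<otimes> b)" if "P \<in> Ps" "m \<in> fst P" for P m
      using expansion[OF coeff_A[OF that]] by simp
  qed
qed

end

end

section \<open>Descent to the constants of k\<close>

definition constrained_by ::
    "('a, 'b) ring_scheme \<Rightarrow> 'd set \<Rightarrow> ('d \<Rightarrow> 'a \<Rightarrow> 'a) \<Rightarrow> 'a set \<Rightarrow> nat \<Rightarrow> (nat \<Rightarrow> 'a) \<Rightarrow>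
      ('d dmono set \<times> ('d dmono \<Rightarrow> 'a)) set \<Rightarrow> 'd dmono set \<times> ('d dmono \<Rightarrow> 'a) \<Rightarrow> bool"
  where "constrained_by K \<Delta> D k r \<eta> Ps Q \<longleftrightarrow>
    finite Ps \<and> Ps \<subseteq> dpolys k \<Delta> r \<and> Q \<in> dpolys k \<Delta> r \<and>
    (\<forall>P\<in>Ps. dpoly_eval K D id P \<eta> = \<zero>\<^bsub>K\<^esub>) \<and> dpoly_eval K D id Q \<eta> \<noteq> \<zero>\<^bsub>K\<^esub> \<and>
    (\<forall>(E::'a ring) DE \<phi> \<zeta>. diff_ext K \<Delta> D k E DE \<phi> \<longrightarrow> (\<forall>i<r. \<zeta> i \<in> carrier E) \<longrightarrow>
       (\<forall>P\<in>Ps. dpoly_eval E DE \<phi> P \<zeta> = \<zero>\<^bsub>E\<^esub>) \<longrightarrow> dpoly_eval E DE \<phi> Q \<zeta> \<noteq> \<zero>\<^bsub>E\<^esub> \<longrightarrow>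
       (\<exists>\<psi>. \<psi> \<in> ring_iso (K\<lparr>carrier := dring_gen K \<Delta> D k r \<eta>\<rparr>)
                       (E\<lparr>carrier := dring_gen E \<Delta> DE (\<phi> ` k) r \<zeta>\<rparr>) \<and>
             (\<forall>x\<in>k. \<psi> x = \<phi> x) \<and> (\<forall>i<r. \<psi> (\<eta> i) = \<zeta> i) \<and>
             (\<forall>d\<in>\<Delta>. \<forall>x\<in>dring_gen K \<Delta> D k r \<eta>. \<psi> (D d x) = DE d (\<psi> x))))"

lemma constrained_iff_constrained_by:
  "constrained K \<Delta> D k r \<eta> \<longleftrightarrow> (\<exists>Ps Q. constrained_by K \<Delta> D k r \<eta> Ps Q)"
  unfolding constrained_def constrained_by_def by blast

context differential_field
begin

lemma exists_constant_components:
  assumes S: "diff_subfield K \<Delta> D S" and \<Lambda>: "\<Lambda> \<subseteq> \<Delta>"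
    and Ps: "finite Ps" "Ps \<subseteq> dpolys S \<Delta> r"
  obtains B :: "'a set" and \<gamma> :: "'a \<Rightarrow> 'a \<Rightarrow> 'a" where "finite B"
    and "\<And>P b. P \<in> Ps \<Longrightarrow> b \<in> B \<Longrightarrow>
      dpoly_component (\<Delta> - \<Lambda>) \<gamma> P b \<in> dpolys (constants K \<Lambda> D S) (\<Delta> - \<Lambda>) r"
    and "\<And>P z. P \<in> Ps \<Longrightarrow> \<forall>i<r. z i \<in> constants K \<Lambda> D (carrier K) \<Longrightarrow>
      dpoly_eval K D id P z = \<zero> \<longleftrightarrow> (\<forall>b\<in>B. dpoly_eval K D id (dpoly_component (\<Delta> - \<Lambda>) \<gamma> P b) z = \<zero>)"
proof -
  obtain B \<gamma> where B_S: "B \<subseteq> S" and B: "lin_indep_over (constants K \<Lambda> D S) B"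
    and \<gamma>: "\<And>P m b. P \<in> Ps \<Longrightarrow> m \<in> fst P \<Longrightarrow> b \<in> B \<Longrightarrow> \<gamma> (snd P m) b \<in> constants K \<Lambda> D S"
    and coeff: "\<And>P m. P \<in> Ps \<Longrightarrow> m \<in> fst P \<Longrightarrow> snd P m = (\<Oplus>b\<in>B. \<gamma> (snd P m) b \<otimes> b)"
    using exists_coefficient_basis[OF S \<Lambda> Ps] by blast
  have C_K: "constants K \<Lambda> D S \<subseteq> constants K \<Lambda> D (carrier K)"
    using diff_subfield_subset_carrier[OF S \<Lambda>] unfolding constants_def by blast
  show ?thesis
  proof (rule that[of B \<gamma>])
    show "finite B"
      using B unfolding lin_indep_over_def by blast
    show "dpoly_component (\<Delta> - \<Lambda>) \<gamma> P b \<in> dpolys (constants K \<Lambda> D S) (\<Delta> - \<Lambda>) r"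
      if "P \<in> Ps" "b \<in> B" for P b
    proof (rule dpoly_component_in_dpolys)
      show "P \<in> dpolys S \<Delta> r"
        using Ps(2) that(1) by blast
    qed (rule \<gamma>[OF that(1) _ that(2)])
    show "dpoly_eval K D id P z = \<zero> \<longleftrightarrow> (\<forall>b\<in>B. dpoly_eval K D id (dpoly_component (\<Delta> - \<Lambda>) \<gamma> P b) z = \<zero>)"
      if P: "P \<in> Ps" and z: "\<forall>i<r. z i \<in> constants K \<Lambda> D (carrier K)" for P z
    proof (rule dpoly_eval_eq_zero_iff_components[OF diff_subfield_carrier \<Lambda>, of r z])
      show "z i \<in> constants K \<Lambda> D (carrier K)" if "i < r" for i
        using z that by blast
      show "P \<in> dpolys S \<Delta> r"
        using Ps(2) P by blast
      show "lin_indep_over (constants K \<Lambda> D (carrier K)) B"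
        by (rule lin_indep_over_constants_of_carrier[OF S \<Lambda> B_S B])
      show "\<gamma> (snd P m) b \<in> constants K \<Lambda> D (carrier K)" if "m \<in> fst P" "b \<in> B" for m b
        using \<gamma>[OF P that] C_K by blast
      show "snd P m = (\<Oplus>b\<in>B. \<gamma> (snd P m) b \<otimes> b)" if "m \<in> fst P" for m
        by (rule coeff[OF P that])
    qed
  qed
qed

lemma exists_constant_solution:
  assumes k: "diff_subfield K \<Delta> D k" and \<Lambda>: "\<Lambda> \<subseteq> \<Delta>"
    and closed: "diff_closed K (\<Delta> - \<Lambda>) D (constants K \<Lambda> D k)"
    and Ps: "finite Ps" "Ps \<subseteq> dpolys k \<Delta> r" and Q: "Q \<in> dpolys k \<Delta> r"
    and \<eta>: "\<And>i. i < r \<Longrightarrow> \<eta> i \<in> constants K \<Lambda> D (carrier K)"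
    and Ps_\<eta>: "\<forall>P\<in>Ps. dpoly_eval K D id P \<eta> = \<zero>" and Q_\<eta>: "dpoly_eval K D id Q \<eta> \<noteq> \<zero>"
  obtains \<zeta> where "\<And>i. i < r \<Longrightarrow> \<zeta> i \<in> constants K \<Lambda> D k"
    and "\<forall>P\<in>Ps. dpoly_eval K D id P \<zeta> = \<zero>" and "dpoly_eval K D id Q \<zeta> \<noteq> \<zero>"
proof -
  let ?C = "constants K \<Lambda> D k" and ?C\<^sub>K = "constants K \<Lambda> D (carrier K)"
  have "finite (insert Q Ps)" and "insert Q Ps \<subseteq> dpolys k \<Delta> r"
    using Ps Q by auto
  then obtain B :: "'a set" and \<gamma> :: "'a \<Rightarrow> 'a \<Rightarrow> 'a" where "finite B"
    and comp: "\<And>P b. P \<in> insert Q Ps \<Longrightarrow> b \<in> B \<Longrightarrow>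
      dpoly_component (\<Delta> - \<Lambda>) \<gamma> P b \<in> dpolys ?C (\<Delta> - \<Lambda>) r"
    and zero_iff: "\<And>P z. P \<in> insert Q Ps \<Longrightarrow> \<forall>i<r. z i \<in> ?C\<^sub>K \<Longrightarrow>
      dpoly_eval K D id P z = \<zero> \<longleftrightarrow> (\<forall>b\<in>B. dpoly_eval K D id (dpoly_component (\<Delta> - \<Lambda>) \<gamma> P b) z = \<zero>)"
    by (rule exists_constant_components[OF k \<Lambda>]) (rule that)
  let ?comp = "dpoly_component (\<Delta> - \<Lambda>) \<gamma>"
  have \<eta>_K: "\<forall>i<r. \<eta> i \<in> ?C\<^sub>K"
    using \<eta> by blast
  obtain b\<^sub>0 where "b\<^sub>0 \<in> B" and Q'_\<eta>: "dpoly_eval K D id (?comp Q b\<^sub>0) \<eta> \<noteq> \<zero>"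
    using zero_iff[OF insertI1 \<eta>_K] Q_\<eta> by blast
  define Ps' where "Ps' = (\<lambda>(P, b). ?comp P b) ` (Ps \<times> B)"
  have "finite Ps'"
    unfolding Ps'_def using Ps(1) \<open>finite B\<close> by simp
  moreover have "Ps' \<subseteq> dpolys ?C (\<Delta> - \<Lambda>) r"
    unfolding Ps'_def image_subset_iff using comp by auto
  moreover have "\<forall>P\<in>Ps'. dpoly_eval K D id P \<eta> = \<zero>"
    using zero_iff[OF insertI2 \<eta>_K] Ps_\<eta> unfolding Ps'_def by fastforce
  moreover have "?C \<subseteq> carrier K"
    using k subfieldE(3) unfolding diff_subfield_def constants_def by blast
  ultimately obtain \<zeta> where \<zeta>: "\<And>i. i < r \<Longrightarrow> \<zeta> i \<in> ?C"
    and Ps'_\<zeta>: "\<forall>P\<in>Ps'. dpoly_eval K D id P \<zeta> = \<zero>" and Q'_\<zeta>: "dpoly_eval K D id (?comp Q b\<^sub>0) \<zeta> \<noteq> \<zero>"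
    using diff_closed_solution[OF closed Diff_subset, where Ps = Ps' and \<eta> = \<eta>]
      comp[OF insertI1 \<open>b\<^sub>0 \<in> B\<close>] \<eta> Q'_\<eta> constants_closed[OF diff_subfield_carrier \<Lambda>]
    by blast
  have \<zeta>_K: "\<forall>i<r. \<zeta> i \<in> ?C\<^sub>K"
    using \<zeta> k subfieldE(3) unfolding diff_subfield_def constants_def by blast
  show ?thesis
  proof (rule that[OF \<zeta>])
    show "\<forall>P\<in>Ps. dpoly_eval K D id P \<zeta> = \<zero>"
      using zero_iff[OF insertI2 \<zeta>_K] Ps'_\<zeta> unfolding Ps'_def by blast
    show "dpoly_eval K D id Q \<zeta> \<noteq> \<zero>"
      using zero_iff[OF insertI1 \<zeta>_K] Q'_\<zeta> \<open>b\<^sub>0 \<in> B\<close> by blast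
  qed
qed

lemma constrained_by_eq_solution_in_subfield:
  assumes sys: "constrained_by K \<Delta> D k r \<eta> Ps Q" and k: "diff_subfield K \<Delta> D k"
    and \<zeta>: "\<And>i. i < r \<Longrightarrow> \<zeta> i \<in> k"
    and Ps_\<zeta>: "\<forall>P\<in>Ps. dpoly_eval K D id P \<zeta> = \<zero>" and Q_\<zeta>: "dpoly_eval K D id Q \<zeta> \<noteq> \<zero>"
    and "i < r"
  shows "\<eta> i = \<zeta> i"
proof -
  have k_closed: "k \<subseteq> carrier K"
    using k subfieldE(3) unfolding diff_subfield_def by blast
  obtain \<psi> where iso: "\<psi> \<in> ring_iso (K\<lparr>carrier := dring_gen K \<Delta> D k r \<eta>\<rparr>)
      (ring.truncate K\<lparr>carrier := dring_gen (ring.truncate K) \<Delta> D (id ` k) r \<zeta>\<rparr>)"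
    and \<psi>_k: "\<forall>x\<in>k. \<psi> x = x" and \<psi>_\<eta>: "\<forall>i<r. \<psi> (\<eta> i) = \<zeta> i"
  proof -
    note ext = sys[unfolded constrained_by_def, THEN conjunct2, THEN conjunct2, THEN conjunct2,
        THEN conjunct2, THEN conjunct2, rule_format, of "ring.truncate K" D id \<zeta>]
    show ?thesis
      using ext[OF diff_ext_ring_truncate[OF order_refl k_closed]] \<zeta> Ps_\<zeta> Q_\<zeta> k_closed that
      by (auto simp: subset_iff)
  qed
  have "\<eta> i = dvar_val D \<eta> (i, [])"
    unfolding dvar_val_def by simp
  then have "\<eta> i \<in> {dvar_val D \<eta> (j, ds) | j ds. j < r \<and> set ds \<subseteq> \<Delta>}"
    using \<open>i < r\<close> by fastforce
  then have "\<eta> i \<in> dring_gen K \<Delta> D k r \<eta>"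
    unfolding dring_gen_def by (blast intro: generate_ring.incl)
  moreover have "\<zeta> i \<in> dring_gen K \<Delta> D k r \<eta>"
    unfolding dring_gen_def using \<zeta> \<open>i < r\<close> by (auto intro: generate_ring.incl)
  moreover have "\<psi> (\<eta> i) = \<psi> (\<zeta> i)"
    using \<psi>_k \<psi>_\<eta> \<zeta> \<open>i < r\<close> by simp
  moreover have "inj_on \<psi> (dring_gen K \<Delta> D k r \<eta>)"
    using iso unfolding ring_iso_def bij_betw_def by simp
  ultimately show ?thesis
    by (simp add: inj_on_def)
qed

end

theorem lemma9p3:
  fixes K :: "('a,'b) ring_scheme" and \<Delta> \<Lambda> :: "'d set"
    and D :: "'d \<Rightarrow> 'a \<Rightarrow> 'a" and k :: "'a set"
  assumes "diff_field K \<Delta> D"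
    and "diff_subfield K \<Delta> D k"
    and "\<Lambda> \<subseteq> \<Delta>"
    and "diff_closed K (\<Delta> - \<Lambda>) D (constants K \<Lambda> D k)"
    and "constrained_ext K \<Delta> D k"
  shows "constants K \<Lambda> D (carrier K) = constants K \<Lambda> D k"
proof -
  interpret differential_field K \<Delta> D
    by (rule differential_field.intro) fact
  have "c \<in> k" if c: "c \<in> constants K \<Lambda> D (carrier K)" for c
  proof -
    let ?\<eta> = "\<lambda>_::nat. c"
    have "constrained K \<Delta> D k 1 ?\<eta>"
      using assms(5) c unfolding constrained_ext_def constants_def by auto
    then obtain Ps Q where sys: "constrained_by K \<Delta> D k 1 ?\<eta> Ps Q"
      unfolding constrained_iff_constrained_by by blast
    then obtain \<zeta> where \<zeta>: "\<zeta> 0 \<in> constants K \<Lambda> D k"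
      and "\<forall>P\<in>Ps. dpoly_eval K D id P \<zeta> = \<zero>\<^bsub>K\<^esub>" and "dpoly_eval K D id Q \<zeta> \<noteq> \<zero>\<^bsub>K\<^esub>"
      using exists_constant_solution[OF assms(2-4), of Ps 1 Q ?\<eta>] c
      unfolding constrained_by_def by (metis less_one)
    then have "c = \<zeta> 0"
      using constrained_by_eq_solution_in_subfield[OF sys assms(2), of \<zeta> 0] unfolding constants_def by auto
    with \<zeta> show "c \<in> k"
      unfolding constants_def by blast
  qed
  moreover have "k \<subseteq> carrier K"
    using assms(2) subfieldE(3) unfolding diff_subfield_def by blast
  ultimately show ?thesis
    unfolding constants_def by blast
qed

end
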